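(* Assume $\phi$ is convex and decreasing (i.e. $\phi(a)\ge\phi(b)$ whenever $a\le b$), and let $\mathbf{w}_{\mathrm{sup}}$ be a minimizer of $R_\phi$. Assume that for each $j=1,\dots,U$ the derivatives $\phi'(\mathbf{x}_{\mathrm{u},j}^\top\mathbf{w}_{\mathrm{sup}})$ and $\phi'(-\mathbf{x}_{\mathrm{u},j}^\top\mathbf{w}_{\mathrm{sup}})$ exist. Define $\mathbf{q}\in\mathbb{R}^U$ by $$q_j=\frac{\phi'(-\mathbf{x}_{\mathrm{u},j}^\top\mathbf{w}_{\mathrm{sup}})}{\phi'(\mathbf{x}_{\mathrm{u},j}^\top\mathbf{w}_{\mathrm{sup}})+\phi'(-\mathbf{x}_{\mathrm{u},j}^\top\mathbf{w}_{\mathrm{sup}})}$$ if the denominator is nonzero, and $q_j$ an arbitrary element of $[0,1]$ otherwise. Then $\mathbf{q}\in[0,1]^U$ and $\mathbf{w}_{\mathrm{sup}}$ is a minimizer of $R^{\mathrm{semi}}_\phi(\cdot,\mathbf{q})$. In particular $\mathbf{w}_{\mathrm{sup}}\in\mathcal{C}_\phi$.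
   Context: Fix integers $L,U,d\ge 1$. Let $\mathbf{X}\in\mathbb{R}^{L\times d}$ be a matrix whose rows $\mathbf{x}_1^\top,\dots,\mathbf{x}_L^\top$ are the labeled objects, with labels $\mathbf{y}\in\{-1,+1\}^L$. Let $\mathbf{X}_{\mathrm{u}}\in\mathbb{R}^{U\times d}$ be a matrix whose rows $\mathbf{x}_{\mathrm{u},1}^\top,\dots,\mathbf{x}_{\mathrm{u},U}^\top$ are the unlabeled objects. Let $\phi:\mathbb{R}\to\mathbb{R}$ be a loss function, $\Omega:\mathbb{R}^d\to\mathbb{R}$ a convex function and $\lambda\ge 0$. The supervised risk is $R_\phi(\mathbf{w})=\sum_{i=1}^L\phi(y_i\mathbf{x}_i^\top\mathbf{w})+\lambda\Omega(\mathbf{w})$. For responsibilities $\mathbf{q}\in[0,1]^U$ the semi-supervised risk is $R^{\mathrm{semi}}_\phi(\mathbf{w},\mathbf{q})=R_\phi(\mathbf{w})+\sum_{j=1}^U\big[q_j\phi(\mathbf{x}_{\mathrm{u},j}^\top\mathbf{w})+(1-q_j)\phi(-\mathbf{x}_{\mathrm{u},j}^\top\mathbf{w})\big]$. The constraint set is $\mathcal{C}_\phi=\{\mathbf{w}\in\mathbb{R}^d:\ \exists\,\mathbf{q}\in[0,1]^U \text{ such that } \mathbf{w} \text{ minimizes } R^{\mathrm{semi}}_\phi(\cdot,\mathbf{q})\}$. *)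

theory Defs
  imports "HOL-Analysis.Analysis"
begin

definition R_sup :: "(real \<Rightarrow> real) \<Rightarrow> (real^'d \<Rightarrow> real) \<Rightarrow> real \<Rightarrow> nat \<Rightarrow>
    (nat \<Rightarrow> real^'d) \<Rightarrow> (nat \<Rightarrow> real) \<Rightarrow> real^'d \<Rightarrow> real" where
  "R_sup \<phi> \<Omega> lam L X y w = (\<Sum>i<L. \<phi> (y i * (X i \<bullet> w))) + lam * \<Omega> w"

definition R_semi :: "(real \<Rightarrow> real) \<Rightarrow> (real^'d \<Rightarrow> real) \<Rightarrow> real \<Rightarrow> nat \<Rightarrow>
    (nat \<Rightarrow> real^'d) \<Rightarrow> (nat \<Rightarrow> real) \<Rightarrow> nat \<Rightarrow> (nat \<Rightarrow> real^'d) \<Rightarrow>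
    real^'d \<Rightarrow> (nat \<Rightarrow> real) \<Rightarrow> real" where
  "R_semi \<phi> \<Omega> lam L X y U Xu w q = R_sup \<phi> \<Omega> lam L X y w +
     (\<Sum>j<U. q j * \<phi> (Xu j \<bullet> w) + (1 - q j) * \<phi> (- (Xu j \<bullet> w)))"

definition is_minimizer :: "('a \<Rightarrow> real) \<Rightarrow> 'a \<Rightarrow> bool" where
  "is_minimizer f w \<longleftrightarrow> (\<forall>v. f w \<le> f v)"

definition C_phi :: "(real \<Rightarrow> real) \<Rightarrow> (real^'d \<Rightarrow> real) \<Rightarrow> real \<Rightarrow> nat \<Rightarrow>
    (nat \<Rightarrow> real^'d) \<Rightarrow> (nat \<Rightarrow> real) \<Rightarrow> nat \<Rightarrow> (nat \<Rightarrow> real^'d) \<Rightarrow> (real^'d) set" where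
  "C_phi \<phi> \<Omega> lam L X y U Xu = {w. \<exists>q. (\<forall>j<U. q j \<in> {0..1}) \<and>
      is_minimizer (\<lambda>v. R_semi \<phi> \<Omega> lam L X y U Xu v q) w}"

end

theory Submission
  imports Defs
begin

text \<open>On each unlabeled point the semi-supervised loss is the convex combination
  \<open>q \<phi>(t) + (1 - q) \<phi>(-t)\<close> with \<open>t = x\<^sub>u\<^sup>T w\<close>. The chosen \<open>q\<close> balances the two slopes,
  \<open>q \<phi>'(t) = (1 - q) \<phi>'(-t)\<close>, so the derivative of this combination in \<open>t\<close> vanishes at
  \<open>w\<^sub>s\<^sub>u\<^sub>p\<close>; by convexity \<open>w\<^sub>s\<^sub>u\<^sub>p\<close> therefore minimizes every unlabeled term as well as the
  supervised risk, hence their sum. Since \<open>\<phi>\<close> is decreasing both slopes are nonpositive,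
  which is what makes \<open>q\<close> lie in \<open>[0, 1]\<close>.\<close>

lemma convex_on_above_tangent_deriv:
  fixes f :: "real \<Rightarrow> real"
  assumes "convex_on UNIV f" and "f differentiable (at c)"
  shows "f x - f c \<ge> deriv f c * (x - c)"
proof -
  have "(f has_field_derivative deriv f c) (at c within UNIV)"
    using assms(2) DERIV_deriv_iff_real_differentiable by auto
  then show ?thesis
    using convex_on_imp_above_tangent[OF assms(1)] by auto
qed

lemma antimono_imp_deriv_nonpos:
  fixes f :: "real \<Rightarrow> real"
  assumes "antimono f" and "f differentiable (at c)"
  shows "deriv f c \<le> 0"
proof (rule ccontr)
  assume "\<not> deriv f c \<le> 0"
  then have pos: "0 < deriv f c" by simp
  have "DERIV f c :> deriv f c"
    using assms(2) DERIV_deriv_iff_real_differentiable by auto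
  from DERIV_pos_inc_right[OF this pos] obtain d
    where "d > 0" and inc: "\<forall>h > 0. h < d \<longrightarrow> f c < f (c + h)"
    by blast
  then have "f c < f (c + d / 2)"
    by (simp add: inc)
  moreover have "f (c + d / 2) \<le> f c"
    using \<open>d > 0\<close> antimonoD[OF assms(1), of c "c + d / 2"] by simp
  ultimately show False by simp
qed

lemma balanced_weight:
  fixes dp dm q :: real
  assumes "dp \<le> 0" and "dm \<le> 0"
    and "dp + dm \<noteq> 0 \<longrightarrow> q = dm / (dp + dm)"
    and "dp + dm = 0 \<longrightarrow> q \<in> {0..1}"
  shows "q \<in> {0..1}" and "q * dp = (1 - q) * dm"
proof -
  have "q \<in> {0..1} \<and> q * dp = (1 - q) * dm"
  proof (cases "dp + dm = 0")
    case True
    then have "dp = 0" and "dm = 0"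
      using assms(1,2) by linarith+
    then show ?thesis using True assms(4) by simp
  next
    case False
    then have q: "q = dm / (dp + dm)" and neg: "dp + dm < 0"
      using assms by auto
    have "0 \<le> q" "q \<le> 1"
      unfolding q using neg assms(1,2) by (simp_all add: divide_nonpos_neg divide_le_eq)
    moreover have "q * dp = (1 - q) * dm"
      unfolding q using False by (simp add: field_simps)
    ultimately show ?thesis by simp
  qed
  then show "q \<in> {0..1}" and "q * dp = (1 - q) * dm" by auto
qed

lemma convex_symmetric_mixture_minimal:
  fixes f :: "real \<Rightarrow> real"
  assumes cvx: "convex_on UNIV f"
    and diff: "f differentiable (at t)" "f differentiable (at (- t))"
    and q: "q \<in> {0..1}" and balance: "q * deriv f t = (1 - q) * deriv f (- t)"
  shows "q * f t + (1 - q) * f (- t) \<le> q * f s + (1 - q) * f (- s)"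
proof -
  have "q * (deriv f t * (s - t)) + (1 - q) * (deriv f (- t) * (- s - - t))
      \<le> q * (f s - f t) + (1 - q) * (f (- s) - f (- t))"
  proof (rule add_mono)
    show "q * (deriv f t * (s - t)) \<le> q * (f s - f t)"
      using q convex_on_above_tangent_deriv[OF cvx diff(1)] by (simp add: mult_left_mono)
    show "(1 - q) * (deriv f (- t) * (- s - - t)) \<le> (1 - q) * (f (- s) - f (- t))"
      using q convex_on_above_tangent_deriv[OF cvx diff(2), of "- s"] by (simp add: mult_left_mono)
  qed
  moreover have "q * (deriv f t * (s - t)) + (1 - q) * (deriv f (- t) * (- s - - t))
      = (s - t) * (q * deriv f t - (1 - q) * deriv f (- t))"
    by (simp add: algebra_simps)
  ultimately show ?thesis
    using balance by (simp add: algebra_simps)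
qed

lemma is_minimizer_add_sum:
  assumes "is_minimizer f w" and "\<And>j v. j \<in> A \<Longrightarrow> g j w \<le> g j v"
  shows "is_minimizer (\<lambda>v. f v + (\<Sum>j\<in>A. g j v)) w"
  unfolding is_minimizer_def
proof
  fix v
  have "f w \<le> f v"
    using assms(1) unfolding is_minimizer_def by blast
  moreover have "(\<Sum>j\<in>A. g j w) \<le> (\<Sum>j\<in>A. g j v)"
    using assms(2) by (rule sum_mono)
  ultimately show "f w + (\<Sum>j\<in>A. g j w) \<le> f v + (\<Sum>j\<in>A. g j v)"
    by (rule add_mono)
qed

theorem lemma2:
  fixes \<phi> :: "real \<Rightarrow> real" and \<Omega> :: "real^'d \<Rightarrow> real" and lam :: real
    and L U :: nat and X Xu :: "nat \<Rightarrow> real^'d" and y q :: "nat \<Rightarrow> real"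
    and w_sup :: "real^'d"
  assumes "L \<ge> 1" and "U \<ge> 1"
    and "\<forall>i<L. y i \<in> {-1, 1}"
    and "convex_on UNIV \<Omega>" and "lam \<ge> 0"
    and "convex_on UNIV \<phi>"
    and "\<forall>a b. a \<le> b \<longrightarrow> \<phi> b \<le> \<phi> a"
    and "is_minimizer (R_sup \<phi> \<Omega> lam L X y) w_sup"
    and "\<forall>j<U. \<phi> differentiable (at (Xu j \<bullet> w_sup)) \<and>
               \<phi> differentiable (at (- (Xu j \<bullet> w_sup)))"
    and "\<forall>j<U. (let dp = deriv \<phi> (Xu j \<bullet> w_sup); dm = deriv \<phi> (- (Xu j \<bullet> w_sup)) in
               (dp + dm \<noteq> 0 \<longrightarrow> q j = dm / (dp + dm)) \<and>
               (dp + dm = 0 \<longrightarrow> q j \<in> {0..1}))"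
  shows "(\<forall>j<U. q j \<in> {0..1}) \<and>
         is_minimizer (\<lambda>w. R_semi \<phi> \<Omega> lam L X y U Xu w q) w_sup \<and>
         w_sup \<in> C_phi \<phi> \<Omega> lam L X y U Xu"
proof -
  have "antimono \<phi>"
    using assms(7) by (simp add: antimonoI)
  have q: "q j \<in> {0..1}"
    and balance: "q j * deriv \<phi> (Xu j \<bullet> w_sup) = (1 - q j) * deriv \<phi> (- (Xu j \<bullet> w_sup))"
    if "j < U" for j
  proof -
    from assms(9) that have "\<phi> differentiable (at (Xu j \<bullet> w_sup))"
      and "\<phi> differentiable (at (- (Xu j \<bullet> w_sup)))" by auto
    then have "deriv \<phi> (Xu j \<bullet> w_sup) \<le> 0" and "deriv \<phi> (- (Xu j \<bullet> w_sup)) \<le> 0"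
      using antimono_imp_deriv_nonpos[OF \<open>antimono \<phi>\<close>] by blast+
    with assms(10) that show "q j \<in> {0..1}"
      and "q j * deriv \<phi> (Xu j \<bullet> w_sup) = (1 - q j) * deriv \<phi> (- (Xu j \<bullet> w_sup))"
      using balanced_weight unfolding Let_def by blast+
  qed
  have "is_minimizer (\<lambda>w. R_semi \<phi> \<Omega> lam L X y U Xu w q) w_sup"
    unfolding R_semi_def
  proof (rule is_minimizer_add_sum[OF assms(8)])
    fix j v
    assume "j \<in> {..<U}"
    then show "q j * \<phi> (Xu j \<bullet> w_sup) + (1 - q j) * \<phi> (- (Xu j \<bullet> w_sup))
        \<le> q j * \<phi> (Xu j \<bullet> v) + (1 - q j) * \<phi> (- (Xu j \<bullet> v))"
      using convex_symmetric_mixture_minimal[OF assms(6)] assms(9) q balance by simp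
  qed
  then show ?thesis
    using q unfolding C_phi_def by blast
qed

end
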